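(* Let $T$ be a left-continuous $t$-norm, let $\star=\star_T$, and let $(G,\cdot,D,T)$ and $(G',\cdot,D',T)$ be two complete invariant Menger groups. Then the following are equivalent: (1) there is a group isomorphism $\mathcal I:G\to G'$ with $D'(\mathcal I(x),\mathcal I(y))=D(x,y)$ for all $x,y\in G$; (2) there is a monoid isomorphism $\Phi:(Lip^1_\star(G,\Delta^+),\odot)\to(Lip^1_\star(G',\Delta^+),\odot)$ with $\overline{\mathbb D}'(\Phi(f),\Phi(g))=\overline{\mathbb D}(f,g)$ for all $f,g\in Lip^1_\star(G,\Delta^+)$.
   Context: A distribution function is a nondecreasing, left-continuous function $F:[-\infty,+\infty]\to[0,1]$ with $F(-\infty)=0$, $F(+\infty)=1$; $\Delta^+$ is the set of distribution functions with $F(0)=0$, ordered pointwise (a complete lattice with maximum $\mathcal H_0$, $\mathcal H_0(t)=0$ for $t\le0$, $1$ for $t>0$, and minimum $\mathcal H_\infty$, $\mathcal H_\infty(t)=0$ for $t<+\infty$, $\mathcal H_\infty(+\infty)=1$). A $t$-norm is a map $T:[0,1]^2\to[0,1]$ that is commutative, associative, nondecreasing in each argument, with $T(x,1)=x$. For a $t$-norm $T$, $(L\star_T K)(t)=\sup_{s+u=t}T(L(s),K(u))$; the paper uses (as a known fact from the literature) that for left-continuous $T$, $\star_T$ is a triangle function (commutative, associative, nondecreasing in each argument, $F\star_T\mathcal H_0=F$) which is continuous ($F_n\star_T L_n\xrightarrow{w}F\star_T L$ whenever $F_n\xrightarrow{w}F$, $L_n\xrightarrow{w}L$, where $\xrightarrow{w}$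 denotes convergence at every continuity point of the limit) and sup-continuous ($\sup_i(F_i\star_T L)=(\sup_iF_i)\star_T L$ for every nonempty family). A Menger group $(G,\cdot,D,T)$ is a group $G$ with $D:G\times G\to\Delta^+$ satisfying (i) $D(p,q)=\mathcal H_0$ iff $p=q$; (ii) $D(p,q)=D(q,p)$; (iii) $D(p,q)\star_T D(q,r)\le D(p,r)$; it is invariant if $D(pr,qr)=D(rp,rq)=D(p,q)$ for all $p,q,r$, and complete if for every sequence $(z_n)$ with $D(z_n,z_p)\xrightarrow{w}\mathcal H_0$ ($n,p\to\infty$) there is $z$ with $D(z_n,z)\xrightarrow{w}\mathcal H_0$. $Lip^1_\star(G,\Delta^+)$ is the set of maps $f:G\to\Delta^+$ with $D(x,y)\star f(y)\le f(x)$ for all $x,y$. For maps $f,g:G\to\Delta^+$, $(f\odot g)(x)=\sup_{y,z\in G,\ yz=x}f(y)\star g(z)$. $\Pi(G)$ is the set of $f\in Lip^1_\star(G,\Delta^+)$ for which there is a Cauchy sequence $(a_n)\subset G$ with $D(a_n,x)\xrightarrow{w}f(x)$ for all $x$. $\mathbb D(f,g)=\sup_{x\in G}f(x)\star g(x)$ for $f,g\in\Pi(G)$. $\overline{\mathbb D}$ on $Lip^1_\star(G,\Delta^+)$ is: $\overline{\mathbb D}(f,g)=\mathbb D(f,g)$ if $f,g\in\Pi(G)$; $\overline{\mathbb D}(f,g)=\mathcal H_0$ if $f=g$; $\overline{\mathbb D}(f,g)=\mathcal H_\infty$ if $f\ne g$ and $(f,g)\notin\Pi(G)\times\Pi(G)$;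 $\overline{\mathbb D}'$ is the same construction for $G'$. *)

theory Defs
  imports "HOL-Analysis.Analysis"
begin

type_synonym dfun = "ereal \<Rightarrow> real"

definition distfun :: "dfun \<Rightarrow> bool" where
  "distfun F \<longleftrightarrow> (\<forall>t. 0 \<le> F t \<and> F t \<le> 1) \<and> mono F
     \<and> (\<forall>x::real. ((\<lambda>s. F (ereal s)) \<longlongrightarrow> F (ereal x)) (at_left x))
     \<and> F (-\<infinity>) = 0 \<and> F \<infinity> = 1"

definition DeltaPlus :: "dfun set" where
  "DeltaPlus = {F. distfun F \<and> F 0 = 0}"

definition H0 :: dfun where
  "H0 t = (if t \<le> 0 then 0 else 1)"

definition Hinf :: dfun where
  "Hinf t = (if t = \<infinity> then 1 else 0)"

definition tnorm :: "(real \<Rightarrow> real \<Rightarrow> real) \<Rightarrow> bool" where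
  "tnorm T \<longleftrightarrow>
     (\<forall>x\<in>{0..1}. \<forall>y\<in>{0..1}. T x y \<in> {0..1})
   \<and> (\<forall>x\<in>{0..1}. \<forall>y\<in>{0..1}. T x y = T y x)
   \<and> (\<forall>x\<in>{0..1}. \<forall>y\<in>{0..1}. \<forall>z\<in>{0..1}. T (T x y) z = T x (T y z))
   \<and> (\<forall>x\<in>{0..1}. \<forall>x'\<in>{0..1}. \<forall>y\<in>{0..1}. x \<le> x' \<longrightarrow> T x y \<le> T x' y)
   \<and> (\<forall>x\<in>{0..1}. T x 1 = x)"

definition left_cont_tnorm :: "(real \<Rightarrow> real \<Rightarrow> real) \<Rightarrow> bool" where
  "left_cont_tnorm T \<longleftrightarrow> tnorm T \<and>
     (\<forall>y\<in>{0..1}. \<forall>x\<in>{0<..1}. ((\<lambda>s. T s y) \<longlongrightarrow> T x y) (at_left x))"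

text \<open>The triangle function (L star_T K)(t) = sup over s+u=t of T(L s, K u).\<close>
definition conv :: "(real \<Rightarrow> real \<Rightarrow> real) \<Rightarrow> dfun \<Rightarrow> dfun \<Rightarrow> dfun" where
  "conv T L K = (\<lambda>t. Sup {T (L s) (K u) | s u. s + u = t})"

definition DSup :: "dfun set \<Rightarrow> dfun" where
  "DSup A = (\<lambda>t. Sup ((\<lambda>F. F t) ` A))"

definition wconv :: "('i \<Rightarrow> dfun) \<Rightarrow> dfun \<Rightarrow> 'i filter \<Rightarrow> bool" where
  "wconv Fs F net \<longleftrightarrow>
     (\<forall>t::real. isCont (\<lambda>x. F (ereal x)) t \<longrightarrow> ((\<lambda>i. Fs i (ereal t)) \<longlongrightarrow> F (ereal t)) net)"

definition menger_group ::
  "(real \<Rightarrow> real \<Rightarrow> real) \<Rightarrow> ('a::group_add \<Rightarrow> 'a \<Rightarrow> dfun) \<Rightarrow> bool" where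
  "menger_group T D \<longleftrightarrow>
     (\<forall>p q. D p q \<in> DeltaPlus)
   \<and> (\<forall>p q. D p q = H0 \<longleftrightarrow> p = q)
   \<and> (\<forall>p q. D p q = D q p)
   \<and> (\<forall>p q r. conv T (D p q) (D q r) \<le> D p r)"

definition invariant :: "('a::group_add \<Rightarrow> 'a \<Rightarrow> dfun) \<Rightarrow> bool" where
  "invariant D \<longleftrightarrow> (\<forall>p q r. D (p + r) (q + r) = D p q \<and> D (r + p) (r + q) = D p q)"

definition cauchy_seq :: "('a \<Rightarrow> 'a \<Rightarrow> dfun) \<Rightarrow> (nat \<Rightarrow> 'a) \<Rightarrow> bool" where
  "cauchy_seq D z \<longleftrightarrow> wconv (\<lambda>(n, p). D (z n) (z p)) H0 (sequentially \<times>\<^sub>F sequentially)"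

definition complete_mg :: "('a \<Rightarrow> 'a \<Rightarrow> dfun) \<Rightarrow> bool" where
  "complete_mg D \<longleftrightarrow>
     (\<forall>z. cauchy_seq D z \<longrightarrow> (\<exists>x. wconv (\<lambda>n. D (z n) x) H0 sequentially))"

definition Lip ::
  "(real \<Rightarrow> real \<Rightarrow> real) \<Rightarrow> ('a \<Rightarrow> 'a \<Rightarrow> dfun) \<Rightarrow> ('a \<Rightarrow> dfun) set" where
  "Lip T D = {f. (\<forall>x. f x \<in> DeltaPlus) \<and> (\<forall>x y. conv T (D x y) (f y) \<le> f x)}"

definition odot ::
  "(real \<Rightarrow> real \<Rightarrow> real) \<Rightarrow> ('a::group_add \<Rightarrow> dfun) \<Rightarrow> ('a \<Rightarrow> dfun) \<Rightarrow> 'a \<Rightarrow> dfun" where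
  "odot T f g = (\<lambda>x. DSup {conv T (f y) (g z) | y z. y + z = x})"

definition PiG ::
  "(real \<Rightarrow> real \<Rightarrow> real) \<Rightarrow> ('a \<Rightarrow> 'a \<Rightarrow> dfun) \<Rightarrow> ('a \<Rightarrow> dfun) set" where
  "PiG T D = {f \<in> Lip T D. \<exists>a. cauchy_seq D a \<and> (\<forall>x. wconv (\<lambda>n. D (a n) x) (f x) sequentially)}"

definition DD :: "(real \<Rightarrow> real \<Rightarrow> real) \<Rightarrow> ('a \<Rightarrow> dfun) \<Rightarrow> ('a \<Rightarrow> dfun) \<Rightarrow> dfun" where
  "DD T f g = DSup (range (\<lambda>x. conv T (f x) (g x)))"

definition Dbar ::
  "(real \<Rightarrow> real \<Rightarrow> real) \<Rightarrow> ('a \<Rightarrow> 'a \<Rightarrow> dfun) \<Rightarrow> ('a \<Rightarrow> dfun) \<Rightarrow> ('a \<Rightarrow> dfun) \<Rightarrow> dfun" where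
  "Dbar T D f g =
     (if f \<in> PiG T D \<and> g \<in> PiG T D then DD T f g
      else if f = g then H0 else Hinf)"

end

theory Submission
  imports Defs
begin

text \<open>
  Precomposition with the inverse of \<open>I\<close> transports \<open>Lip\<close>, \<open>odot\<close> and \<open>Dbar\<close> from \<open>D\<close> to \<open>D'\<close>.
  Conversely, the maps \<open>D a\<close> are exactly the invertible elements of the monoid \<open>(Lip T D, odot T)\<close>,
  whose identity is \<open>D 0\<close>: invariance gives \<open>odot T (D a) (D b) = D (a + b)\<close>, and if
  \<open>odot T f g = D 0\<close>, then points \<open>y\<^sub>n\<close> at which both \<open>f y\<^sub>n\<close> and \<open>g (- y\<^sub>n)\<close> are \<open>1/n\<close>-close to
  \<open>H0\<close> form a Cauchy sequence whose limit \<open>a\<close> (completeness) satisfies \<open>f = D a\<close>. Hence a monoid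
  isomorphism \<open>\<Phi>\<close> maps each \<open>D a\<close> to some \<open>D' (I a)\<close>; \<open>I\<close> is a group isomorphism, and an
  isometry because \<open>Dbar T D (D a) (D b) = D a b\<close>.
\<close>

section \<open>Left-continuous t-norms\<close>

locale lc_tnorm =
  fixes T :: "real \<Rightarrow> real \<Rightarrow> real"
  assumes left_cont_tnorm: "left_cont_tnorm T"
begin

lemma tnorm: "tnorm T"
  using left_cont_tnorm unfolding left_cont_tnorm_def by simp

lemma T_range: "0 \<le> a \<Longrightarrow> a \<le> 1 \<Longrightarrow> 0 \<le> b \<Longrightarrow> b \<le> 1 \<Longrightarrow> 0 \<le> T a b \<and> T a b \<le> 1"
  using tnorm unfolding tnorm_def by auto

lemma T_commute: "0 \<le> a \<Longrightarrow> a \<le> 1 \<Longrightarrow> 0 \<le> b \<Longrightarrow> b \<le> 1 \<Longrightarrow> T a b = T b a"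
  using tnorm unfolding tnorm_def by auto

lemma T_assoc:
  "0 \<le> a \<Longrightarrow> a \<le> 1 \<Longrightarrow> 0 \<le> b \<Longrightarrow> b \<le> 1 \<Longrightarrow> 0 \<le> c \<Longrightarrow> c \<le> 1 \<Longrightarrow> T (T a b) c = T a (T b c)"
  using tnorm unfolding tnorm_def by auto

lemma T_one_right: "0 \<le> a \<Longrightarrow> a \<le> 1 \<Longrightarrow> T a 1 = a"
  using tnorm unfolding tnorm_def by (meson atLeastAtMost_iff)

lemma T_one_left: "0 \<le> a \<Longrightarrow> a \<le> 1 \<Longrightarrow> T 1 a = a"
  using T_one_right T_commute by (metis order_refl zero_le_one)

lemma T_mono_left: "0 \<le> a \<Longrightarrow> a \<le> a' \<Longrightarrow> a' \<le> 1 \<Longrightarrow> 0 \<le> b \<Longrightarrow> b \<le> 1 \<Longrightarrow> T a b \<le> T a' b"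
  using tnorm unfolding tnorm_def by auto

lemma T_mono:
  assumes "0 \<le> a" "a \<le> a'" "a' \<le> 1" "0 \<le> b" "b \<le> b'" "b' \<le> 1"
  shows "T a b \<le> T a' b'"
proof -
  have "T a b \<le> T a' b" using T_mono_left assms by auto
  also have "\<dots> = T b a'" using T_commute assms by auto
  also have "\<dots> \<le> T b' a'" using T_mono_left assms by auto
  also have "\<dots> = T a' b'" using T_commute assms by auto
  finally show ?thesis .
qed

lemma T_le_left: "0 \<le> a \<Longrightarrow> a \<le> 1 \<Longrightarrow> 0 \<le> b \<Longrightarrow> b \<le> 1 \<Longrightarrow> T a b \<le> a"
  using T_mono[of a a b 1] T_one_right by auto

lemma T_le_right: "0 \<le> a \<Longrightarrow> a \<le> 1 \<Longrightarrow> 0 \<le> b \<Longrightarrow> b \<le> 1 \<Longrightarrow> T a b \<le> b"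
  using T_le_left T_commute by metis

lemma T_zero_left: "0 \<le> b \<Longrightarrow> b \<le> 1 \<Longrightarrow> T 0 b = 0"
  using T_le_left[of 0 b] T_range[of 0 b] by auto

lemma T_zero_right: "0 \<le> b \<Longrightarrow> b \<le> 1 \<Longrightarrow> T b 0 = 0"
  using T_le_right[of b 0] T_range[of b 0] by auto

lemma T_left_cont:
  "0 \<le> y \<Longrightarrow> y \<le> 1 \<Longrightarrow> 0 < x \<Longrightarrow> x \<le> 1 \<Longrightarrow> ((\<lambda>s. T s y) \<longlongrightarrow> T x y) (at_left x)"
  using left_cont_tnorm unfolding left_cont_tnorm_def by auto

text \<open>Left continuity of \<open>T\<close> is exactly what makes \<open>T a\<close> commute with suprema.\<close>

lemma T_Sup_le:
  assumes a: "0 \<le> a" "a \<le> 1" and B: "B \<noteq> {}" "\<And>b. b \<in> B \<Longrightarrow> 0 \<le> b \<and> b \<le> 1"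
    and le: "\<And>b. b \<in> B \<Longrightarrow> T a b \<le> c"
  shows "T a (Sup B) \<le> c"
proof -
  have bdd: "bdd_above B" using B by (auto intro: bdd_aboveI[of _ 1])
  define S where "S = Sup B"
  have S1: "S \<le> 1" unfolding S_def using B by (auto intro: cSup_least)
  obtain b0 where b0: "b0 \<in> B" using B by auto
  have S0: "b0 \<le> S" unfolding S_def using b0 bdd by (auto intro: cSup_upper)
  show ?thesis
  proof (cases "S \<in> B")
    case True then show ?thesis using le S_def by auto
  next
    case False
    have Spos: "0 < S" using S0 B(2)[OF b0] False b0 by (cases "b0 = S") auto
    have lim: "((\<lambda>s. T s a) \<longlongrightarrow> T S a) (at_left S)" using T_left_cont a Spos S1 by auto
    have "eventually (\<lambda>s. s \<in> {0<..<S}) (at_left S)" using eventually_at_left_real Spos by blast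
    then have "eventually (\<lambda>s. T s a \<le> c) (at_left S)"
    proof (rule eventually_mono)
      fix s assume s: "s \<in> {0<..<S}"
      then obtain b where b: "b \<in> B" "s < b" using less_cSupE[of s B] B S_def by auto
      have "T s a \<le> T b a" using T_mono_left[of s b a] s b B(2)[OF b(1)] a by auto
      also have "\<dots> = T a b" using T_commute B(2)[OF b(1)] a by auto
      finally show "T s a \<le> c" using le[OF b(1)] by linarith
    qed
    then have "T S a \<le> c" using tendsto_upperbound[OF lim] by simp
    then show ?thesis using T_commute a Spos S1 S_def by auto
  qed
qed

lemma T_close_right:
  assumes c: "0 \<le> c" "c \<le> 1" and e: "0 < e"
  shows "\<exists>d>0. \<forall>a. 1 - d < a \<longrightarrow> a \<le> 1 \<longrightarrow> c - e < T c a"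
proof -
  have lim: "((\<lambda>s. T s c) \<longlongrightarrow> c) (at_left 1)" using T_left_cont[of c 1] T_one_left c by auto
  then have "eventually (\<lambda>s. c - e < T s c) (at_left 1)" using order_tendstoD(1)[OF lim] e by auto
  then obtain b where b: "b < 1" "\<forall>s>b. s < 1 \<longrightarrow> c - e < T s c"
    unfolding eventually_at_left_field by auto
  define s0 where "s0 = max ((b + 1) / 2) (1 / 2)"
  have s0: "b < s0" "s0 < 1" "0 < s0" using b unfolding s0_def by (auto simp: max_def)
  show ?thesis
  proof (intro exI[of _ "1 - s0"] conjI allI impI)
    fix a assume "1 - (1 - s0) < a" "a \<le> 1"
    then have "T s0 c \<le> T c a" using T_mono_left[of s0 a c] T_commute[of a c] s0 c by auto
    then show "c - e < T c a" using b s0 by force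
  qed (use s0 in simp)
qed

lemma T_close_to_one:
  assumes e: "0 < e"
  shows "\<exists>d>0. \<forall>a b. 1 - d < a \<longrightarrow> a \<le> 1 \<longrightarrow> 1 - d < b \<longrightarrow> b \<le> 1 \<longrightarrow> 1 - e < T a b"
proof -
  define c where "c = max (1 - e / 2) 0"
  have c: "0 \<le> c" "c \<le> 1" "1 - e / 2 \<le> c" using e unfolding c_def by auto
  obtain d where d: "d > 0" "\<forall>b. 1 - d < b \<longrightarrow> b \<le> 1 \<longrightarrow> c - e / 2 < T c b"
    using T_close_right[OF c(1,2), of "e / 2"] e by auto
  show ?thesis
  proof (intro exI[of _ "min (min d (e / 2)) 1"] conjI allI impI)
    fix a b assume ab: "1 - min (min d (e / 2)) 1 < a" "a \<le> 1" "1 - min (min d (e / 2)) 1 < b" "b \<le> 1"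
    have "c - e / 2 < T c b" using d ab by auto
    also have "\<dots> \<le> T a b"
    proof (rule T_mono_left)
      show "c \<le> a" using ab unfolding c_def by linarith
    qed (use ab c in linarith)+
    finally show "1 - e < T a b" using c by linarith
  qed (use d e in simp)
qed

lemma T_T_close_right:
  assumes c: "0 \<le> c" "c \<le> 1" and e: "0 < e"
  shows "\<exists>d>0. \<forall>a b. 1 - d < a \<longrightarrow> a \<le> 1 \<longrightarrow> 1 - d < b \<longrightarrow> b \<le> 1 \<longrightarrow> c - e < T (T c a) b"
proof -
  obtain d1 where d1: "d1 > 0" "\<forall>w. 1 - d1 < w \<longrightarrow> w \<le> 1 \<longrightarrow> c - e < T c w"
    using T_close_right[OF c e] by auto
  obtain d where d: "d > 0" "\<forall>a b. 1 - d < a \<longrightarrow> a \<le> 1 \<longrightarrow> 1 - d < b \<longrightarrow> b \<le> 1 \<longrightarrow> 1 - d1 < T a b"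
    using T_close_to_one[OF d1(1)] by auto
  show ?thesis
  proof (intro exI[of _ "min d 1"] conjI allI impI)
    fix a b assume ab: "1 - min d 1 < a" "a \<le> 1" "1 - min d 1 < b" "b \<le> 1"
    have "c - e < T c (T a b)" using d1 d ab T_range[of a b] by auto
    then show "c - e < T (T c a) b" using T_assoc[of c a b] c ab by auto
  qed (use d in simp)
qed

end

section \<open>Distribution functions\<close>

lemma DeltaPlus_range: "F \<in> DeltaPlus \<Longrightarrow> 0 \<le> F t \<and> F t \<le> 1"
  unfolding DeltaPlus_def distfun_def by auto

lemma DeltaPlus_mono: "F \<in> DeltaPlus \<Longrightarrow> s \<le> t \<Longrightarrow> F s \<le> F t"
  unfolding DeltaPlus_def distfun_def by (auto dest: monoD)

lemma DeltaPlus_minf: "F \<in> DeltaPlus \<Longrightarrow> F (-\<infinity>) = 0"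
  unfolding DeltaPlus_def distfun_def by auto

lemma DeltaPlus_inf: "F \<in> DeltaPlus \<Longrightarrow> F \<infinity> = 1"
  unfolding DeltaPlus_def distfun_def by auto

lemma DeltaPlus_nonpos: "F \<in> DeltaPlus \<Longrightarrow> t \<le> 0 \<Longrightarrow> F t = 0"
  using DeltaPlus_mono[of F t 0] DeltaPlus_range[of F t] unfolding DeltaPlus_def by auto

lemma DeltaPlus_left_cont: "F \<in> DeltaPlus \<Longrightarrow> ((\<lambda>s. F (ereal s)) \<longlongrightarrow> F (ereal x)) (at_left x)"
  unfolding DeltaPlus_def distfun_def by auto

lemma DeltaPlus_le_at_left:
  assumes "F \<in> DeltaPlus" and "\<And>v. v < r \<Longrightarrow> F (ereal v) \<le> c"
  shows "F (ereal r) \<le> c"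
  by (rule tendsto_upperbound[OF DeltaPlus_left_cont[OF assms(1)]])
    (auto simp: eventually_at_left_field assms(2) intro!: exI[of _ "r - 1"])

lemma DeltaPlus_eqI:
  assumes F: "F \<in> DeltaPlus" and G: "G \<in> DeltaPlus"
    and pos: "\<And>r. 0 < r \<Longrightarrow> F (ereal r) = G (ereal r)"
  shows "F = G"
proof
  fix t show "F t = G t"
  proof (cases t)
    case (real r)
    then show ?thesis using pos DeltaPlus_nonpos[OF F] DeltaPlus_nonpos[OF G] by (cases "r \<le> 0") auto
  qed (use DeltaPlus_inf[OF F] DeltaPlus_inf[OF G] DeltaPlus_minf[OF F] DeltaPlus_minf[OF G] in auto)
qed

lemma H0_DeltaPlus: "H0 \<in> DeltaPlus"
proof -
  have "((\<lambda>s. H0 (ereal s)) \<longlongrightarrow> H0 (ereal x)) (at_left x)" for x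
  proof (rule tendsto_eventually)
    show "eventually (\<lambda>s. H0 (ereal s) = H0 (ereal x)) (at_left x)"
      unfolding eventually_at_left_field
      by (intro exI[of _ "if x \<le> 0 then x - 1 else 0"]) (auto simp: H0_def)
  qed
  moreover have "mono H0" unfolding mono_def H0_def by auto
  ultimately show ?thesis unfolding DeltaPlus_def distfun_def by (auto simp: H0_def)
qed

lemma isCont_H0:
  assumes "0 < t"
  shows "isCont (\<lambda>x. H0 (ereal x)) t"
proof -
  have "eventually (\<lambda>x. 0 < x) (at t)" using order_tendstoD(1)[OF tendsto_ident_at assms] by simp
  then have "eventually (\<lambda>x. H0 (ereal x) = H0 (ereal t)) (at t)"
    by (rule eventually_mono) (use assms in \<open>simp add: H0_def\<close>)
  then show ?thesis unfolding isCont_def by (rule tendsto_eventually)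
qed

lemma wconv_H0_iff:
  assumes F: "\<And>i. F i \<in> DeltaPlus"
  shows "wconv F H0 net \<longleftrightarrow> (\<forall>t>0. \<forall>a<1. eventually (\<lambda>i. a < F i (ereal t)) net)"
proof
  assume w: "wconv F H0 net"
  have "((\<lambda>i. F i (ereal t)) \<longlongrightarrow> 1) net" if "0 < t" for t
  proof -
    have "((\<lambda>i. F i (ereal t)) \<longlongrightarrow> H0 (ereal t)) net"
      using w isCont_H0[OF that] unfolding wconv_def by blast
    then show ?thesis using that by (simp add: H0_def)
  qed
  then show "\<forall>t>0. \<forall>a<1. eventually (\<lambda>i. a < F i (ereal t)) net"
    using order_tendstoD(1) by blast
next
  assume near: "\<forall>t>0. \<forall>a<1. eventually (\<lambda>i. a < F i (ereal t)) net"
  have "((\<lambda>i. F i (ereal t)) \<longlongrightarrow> H0 (ereal t)) net" for t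
  proof (cases "t \<le> 0")
    case True
    then show ?thesis using DeltaPlus_nonpos[OF F] by (simp add: H0_def)
  next
    case False
    show ?thesis
    proof (rule order_tendstoI)
      fix a assume "a < H0 (ereal t)"
      then show "eventually (\<lambda>i. a < F i (ereal t)) net" using near False by (simp add: H0_def)
    next
      fix a assume "H0 (ereal t) < a"
      then have "F i (ereal t) < a" for i using False DeltaPlus_range[OF F, of i "ereal t"] by (simp add: H0_def)
      then show "eventually (\<lambda>i. F i (ereal t) < a) net" by simp
    qed
  qed
  then show "wconv F H0 net" unfolding wconv_def by blast
qed

lemma ereal_add_eq_real: "s + u = ereal r \<Longrightarrow> \<exists>a b. s = ereal a \<and> u = ereal b \<and> a + b = r"
  by (cases s; cases u) auto

lemma ereal_add_eq_minf: "(s::ereal) + u = -\<infinity> \<Longrightarrow> s = -\<infinity> \<or> u = -\<infinity>"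
  by (cases s; cases u) auto

lemma ereal_add_eq_0: "(s::ereal) + u = 0 \<Longrightarrow> \<exists>a. s = ereal a \<and> u = ereal (-a)"
  by (cases s; cases u) auto

section \<open>The triangle function \<open>conv\<close> and the product \<open>odot\<close>\<close>

context lc_tnorm
begin

lemma conv_upper:
  assumes "L \<in> DeltaPlus" "K \<in> DeltaPlus" "s + u = t"
  shows "T (L s) (K u) \<le> conv T L K t"
  unfolding conv_def
proof (rule cSup_upper)
  show "bdd_above {T (L s) (K u) | s u. s + u = t}"
    by (rule bdd_aboveI[of _ 1]) (use T_range DeltaPlus_range assms in blast)
qed (use assms in blast)

lemma conv_least:
  "(\<And>s u. s + u = t \<Longrightarrow> T (L s) (K u) \<le> c) \<Longrightarrow> conv T L K t \<le> c"
  unfolding conv_def by (rule cSup_least) (use add_0_right[of t] in blast, blast)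

lemma conv_range:
  assumes L: "L \<in> DeltaPlus" and K: "K \<in> DeltaPlus"
  shows "0 \<le> conv T L K t \<and> conv T L K t \<le> 1"
proof
  have "T (L t) (K 0) \<le> conv T L K t" using conv_upper[OF L K, of t 0] by simp
  then show "0 \<le> conv T L K t" using T_range DeltaPlus_range L K by (meson order_trans)
  show "conv T L K t \<le> 1" using conv_least T_range DeltaPlus_range L K by blast
qed

lemma conv_commute:
  assumes L: "L \<in> DeltaPlus" and K: "K \<in> DeltaPlus"
  shows "conv T L K = conv T K L"
proof -
  have "T (L s) (K u) = T (K u) (L s)" for s u using T_commute DeltaPlus_range L K by auto
  then have "{T (L s) (K u) | s u. s + u = t} = {T (K s) (L u) | s u. s + u = t}" for t
    by (auto simp: add.commute) (metis add.commute)+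
  then show ?thesis unfolding conv_def by simp
qed

lemma conv_minf:
  assumes L: "L \<in> DeltaPlus" and K: "K \<in> DeltaPlus"
  shows "conv T L K (-\<infinity>) = 0"
proof -
  have "conv T L K (-\<infinity>) \<le> 0"
  proof (rule conv_least)
    fix s u :: ereal assume "s + u = -\<infinity>"
    then have "s = -\<infinity> \<or> u = -\<infinity>" by (rule ereal_add_eq_minf)
    then show "T (L s) (K u) \<le> 0"
      using DeltaPlus_minf[OF L] DeltaPlus_minf[OF K] T_zero_left T_zero_right
        DeltaPlus_range[OF K] DeltaPlus_range[OF L] by auto
  qed
  then show ?thesis using conv_range[OF L K, of "-\<infinity>"] by auto
qed

lemma conv_inf:
  assumes L: "L \<in> DeltaPlus" and K: "K \<in> DeltaPlus"
  shows "conv T L K \<infinity> = 1"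
  using conv_upper[OF L K, of \<infinity> \<infinity> \<infinity>] DeltaPlus_inf[OF L] DeltaPlus_inf[OF K] T_one_right
    conv_range[OF L K, of \<infinity>] by auto

lemma conv_zero:
  assumes L: "L \<in> DeltaPlus" and K: "K \<in> DeltaPlus"
  shows "conv T L K 0 = 0"
proof -
  have "conv T L K 0 \<le> 0"
  proof (rule conv_least)
    fix s u :: ereal assume "s + u = 0"
    then obtain a where "s = ereal a" "u = ereal (-a)" using ereal_add_eq_0 by blast
    then have "L s = 0 \<or> K u = 0"
      using DeltaPlus_nonpos[OF L, of s] DeltaPlus_nonpos[OF K, of u] by (cases "a \<le> 0") auto
    then show "T (L s) (K u) \<le> 0"
      using T_zero_left T_zero_right DeltaPlus_range[OF K] DeltaPlus_range[OF L] by auto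
  qed
  then show ?thesis using conv_range[OF L K, of 0] by auto
qed

lemma conv_H0_left:
  assumes K: "K \<in> DeltaPlus"
  shows "conv T H0 K = K"
proof
  fix t show "conv T H0 K t = K t"
  proof (cases t)
    case (real r)
    have "conv T H0 K (ereal r) \<le> K (ereal r)"
    proof (rule conv_least)
      fix s u :: ereal assume "s + u = ereal r"
      then obtain a b where ab: "s = ereal a" "u = ereal b" "a + b = r" using ereal_add_eq_real by blast
      show "T (H0 s) (K u) \<le> K (ereal r)"
      proof (cases "a \<le> 0")
        case True
        then show ?thesis using ab T_zero_left DeltaPlus_range[OF K] by (simp add: H0_def)
      next
        case False
        then have "K u \<le> K (ereal r)" using DeltaPlus_mono[OF K] ab by auto
        then show ?thesis using False ab T_one_left DeltaPlus_range[OF K] by (simp add: H0_def)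
      qed
    qed
    moreover have "K (ereal r) \<le> conv T H0 K (ereal r)"
    proof (rule DeltaPlus_le_at_left[OF K])
      fix v assume "v < r"
      then have "T (H0 (ereal (r - v))) (K (ereal v)) = K (ereal v)"
        using T_one_left DeltaPlus_range[OF K] by (simp add: H0_def)
      then show "K (ereal v) \<le> conv T H0 K (ereal r)"
        using conv_upper[OF H0_DeltaPlus K, of "ereal (r - v)" "ereal v"] by simp
    qed
    ultimately show ?thesis using real by auto
  qed (use conv_inf[OF H0_DeltaPlus K] conv_minf[OF H0_DeltaPlus K]
         DeltaPlus_inf[OF K] DeltaPlus_minf[OF K] in auto)
qed

lemma conv_H0_right: "K \<in> DeltaPlus \<Longrightarrow> conv T K H0 = K"
  using conv_H0_left conv_commute H0_DeltaPlus by metis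

lemma conv_mono:
  assumes L: "L \<in> DeltaPlus" and K: "K \<in> DeltaPlus" and tt: "t \<le> t'"
  shows "conv T L K t \<le> conv T L K t'"
proof (rule conv_least)
  fix s u :: ereal assume su: "s + u = t"
  show "T (L s) (K u) \<le> conv T L K t'"
  proof (cases "t = -\<infinity> \<or> t' = \<infinity>")
    case True
    moreover have "T (L s) (K u) = 0" if "t = -\<infinity>"
      using ereal_add_eq_minf[OF su[unfolded that]] DeltaPlus_minf[OF L] DeltaPlus_minf[OF K]
        T_zero_left T_zero_right DeltaPlus_range[OF K] DeltaPlus_range[OF L] by auto
    ultimately show ?thesis
      using conv_inf[OF L K] conv_range[OF L K] T_range DeltaPlus_range[OF K] DeltaPlus_range[OF L]
      by (metis order_trans)
  next
    case False
    then obtain r r' where r: "t = ereal r" "t' = ereal r'" "r \<le> r'"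
      using tt by (cases t; cases t') auto
    obtain a b where ab: "s = ereal a" "u = ereal b" "a + b = r" using ereal_add_eq_real su r by blast
    have "T (L s) (K u) \<le> T (L s) (K (ereal (b + (r' - r))))"
      using T_mono DeltaPlus_range L K DeltaPlus_mono[OF K, of u "ereal (b + (r' - r))"] ab r by auto
    also have "\<dots> \<le> conv T L K t'"
      by (rule conv_upper[OF L K]) (use ab r in auto)
    finally show ?thesis .
  qed
qed

lemma T_eventually_gt_at_left:
  assumes L: "L \<in> DeltaPlus" and K: "K \<in> DeltaPlus" and a: "a < T (L (ereal p)) (K (ereal q))"
  shows "eventually (\<lambda>v. a < T (L (ereal p)) (K (ereal (v - p)))) (at_left (p + q))"
proof (cases "a < 0")
  case True
  then show ?thesis using T_range DeltaPlus_range L K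
    by (auto intro!: always_eventually) (meson less_le_trans)
next
  case False
  define c where "c = L (ereal p)"
  define k0 where "k0 = K (ereal q)"
  have c: "0 \<le> c" "c \<le> 1" using DeltaPlus_range[OF L] c_def by auto
  have k: "0 \<le> k0" "k0 \<le> 1" using DeltaPlus_range[OF K] k0_def by auto
  have k0pos: "0 < k0"
  proof (rule ccontr)
    assume "\<not> 0 < k0"
    then have "k0 = 0" using k by auto
    then show False using a False T_zero_right c unfolding c_def k0_def by auto
  qed
  have lim: "((\<lambda>w. T w c) \<longlongrightarrow> T k0 c) (at_left k0)" using T_left_cont c k0pos k by auto
  have "a < T k0 c" using a T_commute c k unfolding c_def k0_def by auto
  then have "eventually (\<lambda>w. a < T w c) (at_left k0)" using order_tendstoD(1)[OF lim] by auto
  then obtain b where b: "b < k0" "\<forall>w>b. w < k0 \<longrightarrow> a < T w c"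
    unfolding eventually_at_left_field by auto
  \<comment> \<open>\<open>w\<^sub>0 < K q\<close> with \<open>a < T w\<^sub>0 (L p)\<close>; then \<open>K\<close> exceeds \<open>w\<^sub>0\<close> just to the left of \<open>q\<close>.\<close>
  define w0 where "w0 = max ((b + k0) / 2) (k0 / 2)"
  have w0: "b < w0" "w0 < k0" "0 < w0" using b k0pos unfolding w0_def by (auto simp: max_def)
  have "eventually (\<lambda>s. w0 < K (ereal s)) (at_left q)"
    using order_tendstoD(1)[OF DeltaPlus_left_cont[OF K, of q]] w0 k0_def by auto
  then obtain b2 where b2: "b2 < q" "\<forall>s>b2. s < q \<longrightarrow> w0 < K (ereal s)"
    unfolding eventually_at_left_field by auto
  show ?thesis unfolding eventually_at_left_field
  proof (intro exI[of _ "b2 + p"] conjI allI impI)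
    fix v assume v: "b2 + p < v" "v < p + q"
    then have kv: "w0 < K (ereal (v - p))" using b2 by auto
    have "a < T w0 c" using b w0 by auto
    also have "\<dots> = T c w0" using T_commute c w0 k by auto
    also have "\<dots> \<le> T c (K (ereal (v - p)))" using T_mono[of c c w0] c w0 kv DeltaPlus_range[OF K] by auto
    finally show "a < T (L (ereal p)) (K (ereal (v - p)))" using c_def by auto
  qed (use b2 in auto)
qed

end

lemma DSup_upper: "F \<in> A \<Longrightarrow> (\<And>G. G \<in> A \<Longrightarrow> G t \<le> 1) \<Longrightarrow> F t \<le> DSup A t"
  unfolding DSup_def by (rule cSup_upper) (auto intro!: bdd_aboveI[of _ 1])

lemma DSup_least: "A \<noteq> {} \<Longrightarrow> (\<And>G. G \<in> A \<Longrightarrow> G t \<le> c) \<Longrightarrow> DSup A t \<le> c"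
  unfolding DSup_def by (rule cSup_least) auto

context lc_tnorm
begin

lemma odot_upper:
  assumes f: "\<And>x. f x \<in> DeltaPlus" and g: "\<And>x. g x \<in> DeltaPlus" and yz: "y + z = x"
  shows "conv T (f y) (g z) t \<le> odot T f g x t"
  unfolding odot_def by (rule DSup_upper) (use yz conv_range f g in auto)

lemma odot_least:
  assumes "\<And>y z. y + z = x \<Longrightarrow> conv T (f y) (g z) t \<le> c"
  shows "odot T f g x t \<le> c"
  unfolding odot_def
proof (rule DSup_least)
  show "{conv T (f y) (g z) |y z. y + z = x} \<noteq> {}" using add_0_right[of x] by blast
qed (use assms in auto)

lemma odot_mono:
  assumes f: "\<And>x. f x \<in> DeltaPlus" and g: "\<And>x. g x \<in> DeltaPlus" and "t \<le> t'"
  shows "odot T f g x t \<le> odot T f g x t'"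
proof (rule odot_least)
  fix y z assume yz: "y + z = x"
  have "conv T (f y) (g z) t \<le> conv T (f y) (g z) t'" by (rule conv_mono[OF f g \<open>t \<le> t'\<close>])
  also have "\<dots> \<le> odot T f g x t'" by (rule odot_upper[of f g, OF f g yz])
  finally show "conv T (f y) (g z) t \<le> odot T f g x t'" .
qed

lemma odot_left_cont:
  assumes f: "\<And>x. f x \<in> DeltaPlus" and g: "\<And>x. g x \<in> DeltaPlus"
  shows "((\<lambda>s. odot T f g x (ereal s)) \<longlongrightarrow> odot T f g x (ereal r)) (at_left r)"
proof (rule order_tendstoI)
  fix a assume a: "a < odot T f g x (ereal r)"
  define A where "A = {conv T (f y) (g z) |y z. y + z = x}"
  have "(\<lambda>F. F (ereal r)) ` A \<noteq> {}" unfolding A_def using add_0_right[of x] by blast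
  then obtain b where "b \<in> (\<lambda>F. F (ereal r)) ` A" "a < b"
    using less_cSupE[of a "(\<lambda>F. F (ereal r)) ` A"] a unfolding odot_def DSup_def A_def by blast
  then obtain y z where yz: "y + z = x" and "a < conv T (f y) (g z) (ereal r)" unfolding A_def by auto
  moreover define S where "S = {T (f y s) (g z u) |s u. s + u = ereal r}"
  moreover have "S \<noteq> {}" unfolding S_def using add_0_right[of "ereal r"] by blast
  ultimately obtain w where "w \<in> S" "a < w" using less_cSupE[of a S] unfolding conv_def by auto
  then obtain s u where su: "s + u = ereal r" "a < T (f y s) (g z u)" unfolding S_def by auto
  then obtain p q where pq: "s = ereal p" "u = ereal q" "p + q = r" using ereal_add_eq_real by blast
  have "eventually (\<lambda>v. a < T (f y (ereal p)) (g z (ereal (v - p)))) (at_left r)"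
    using T_eventually_gt_at_left[OF f g, of a y p z q] su pq by simp
  then show "eventually (\<lambda>v. a < odot T f g x (ereal v)) (at_left r)"
  proof (rule eventually_mono)
    fix v assume "a < T (f y (ereal p)) (g z (ereal (v - p)))"
    also have "\<dots> \<le> conv T (f y) (g z) (ereal v)" by (rule conv_upper[OF f g]) simp
    also have "\<dots> \<le> odot T f g x (ereal v)" by (rule odot_upper[of f g, OF f g yz])
    finally show "a < odot T f g x (ereal v)" .
  qed
next
  fix a assume a: "odot T f g x (ereal r) < a"
  show "eventually (\<lambda>v. odot T f g x (ereal v) < a) (at_left r)"
    unfolding eventually_at_left_field
  proof (intro exI[of _ "r - 1"] conjI allI impI)
    fix v assume "v < r"
    then have "odot T f g x (ereal v) \<le> odot T f g x (ereal r)" using odot_mono[of f g "ereal v" "ereal r" x, OF f g] by simp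
    then show "odot T f g x (ereal v) < a" using a by simp
  qed simp
qed

lemma odot_DeltaPlus:
  assumes f: "\<And>x. f x \<in> DeltaPlus" and g: "\<And>x. g x \<in> DeltaPlus"
  shows "odot T f g x \<in> DeltaPlus"
proof -
  define h where "h = odot T f g x"
  have range: "0 \<le> h t \<and> h t \<le> 1" for t
  proof
    show "0 \<le> h t"
      using odot_upper[of f g x 0 x t, OF f g] conv_range[OF f[of x] g[of 0], of t] unfolding h_def by simp
    show "h t \<le> 1" unfolding h_def by (rule odot_least) (use conv_range f g in auto)
  qed
  have "h (-\<infinity>) \<le> 0" "h 0 \<le> 0" unfolding h_def
    by (rule odot_least, simp add: conv_minf[OF f g] conv_zero[OF f g])+
  then have zeros: "h (-\<infinity>) = 0" "h 0 = 0" using range by (auto intro: antisym)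
  have "1 \<le> h \<infinity>" using odot_upper[of f g x 0 x \<infinity>, OF f g] conv_inf[OF f[of x] g[of 0]] unfolding h_def by simp
  then have one: "h \<infinity> = 1" using range by (auto intro: antisym)
  have "mono h" unfolding h_def mono_def using odot_mono[of f g, OF f g] by blast
  then show ?thesis
    using range zeros one odot_left_cont[of f g, OF f g] unfolding h_def DeltaPlus_def distfun_def by auto
qed

end

lemma Lip_DeltaPlus: "f \<in> Lip T D \<Longrightarrow> f x \<in> DeltaPlus"
  unfolding Lip_def by auto

lemma Lip_le: "f \<in> Lip T D \<Longrightarrow> conv T (D x y) (f y) t \<le> f x t"
  unfolding Lip_def by (auto simp: le_fun_def)

section \<open>Invariant Menger groups\<close>

locale invariant_menger_group = lc_tnorm +
  fixes D :: "'a::group_add \<Rightarrow> 'a \<Rightarrow> dfun"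
  assumes menger_group: "menger_group T D" and invariant: "invariant D"
begin

lemma D_DeltaPlus: "D p q \<in> DeltaPlus"
  using menger_group unfolding menger_group_def by blast

lemma D_eq_H0_iff: "D p q = H0 \<longleftrightarrow> p = q"
  using menger_group unfolding menger_group_def by blast

lemma D_self: "D p p = H0"
  using D_eq_H0_iff by blast

lemma D_commute: "D p q = D q p"
  using menger_group unfolding menger_group_def by blast

lemma D_triangle: "conv T (D p q) (D q r) t \<le> D p r t"
proof -
  have "conv T (D p q) (D q r) \<le> D p r" using menger_group unfolding menger_group_def by blast
  then show ?thesis by (simp add: le_fun_def)
qed

lemma D_add_right: "D (p + r) (q + r) = D p q"
  using invariant unfolding invariant_def by blast

lemma D_add_left: "D (r + p) (r + q) = D p q"
  using invariant unfolding invariant_def by blast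

lemma D_Lip: "D a \<in> Lip T D"
proof -
  have "conv T (D x y) (D a y) t \<le> D a x t" for x y t
    using D_triangle[of x y a t] D_commute[of a y] D_commute[of a x] by simp
  then show ?thesis unfolding Lip_def le_fun_def using D_DeltaPlus by blast
qed

lemma inj_D: "inj D"
proof (rule injI)
  fix a b assume "D a = D b"
  then have "D b a = H0" using D_self[of a] by simp
  then show "a = b" using D_eq_H0_iff by simp
qed

lemma odot_D: "odot T (D a) (D b) = D (a + b)"
proof (intro ext antisym)
  fix x t
  show "odot T (D a) (D b) x t \<le> D (a + b) x t"
  proof (rule odot_least)
    fix y z assume yz: "y + z = x"
    have "D a y = D (a + z) x" using D_add_right[of a z y] yz by simp
    moreover have "D b z = D (a + b) (a + z)" using D_add_left[of a b z] by (simp add: add.assoc)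
    ultimately show "conv T (D a y) (D b z) t \<le> D (a + b) x t"
      using D_triangle[of "a + b" "a + z" x t] conv_commute[OF D_DeltaPlus D_DeltaPlus] by simp
  qed
  have "D (a + b) x t = conv T (D a a) (D b (- a + x)) t"
    using D_add_left[of a b "- a + x"] conv_H0_left[OF D_DeltaPlus] D_self
    by (simp add: add.assoc[symmetric])
  also have "\<dots> \<le> odot T (D a) (D b) x t"
    by (rule odot_upper[OF D_DeltaPlus D_DeltaPlus]) (simp add: add.assoc[symmetric])
  finally show "D (a + b) x t \<le> odot T (D a) (D b) x t" .
qed

lemma odot_D0_left:
  assumes f: "f \<in> Lip T D"
  shows "odot T (D 0) f = f"
proof (intro ext antisym)
  fix x t
  show "odot T (D 0) f x t \<le> f x t"
  proof (rule odot_least)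
    fix y z assume "y + z = x"
    then have "D 0 y = D x z" using D_add_right[of 0 z y] D_commute[of z x] by simp
    then show "conv T (D 0 y) (f z) t \<le> f x t" using Lip_le[OF f] by simp
  qed
  have "f x t = conv T (D 0 0) (f x) t" using conv_H0_left[OF Lip_DeltaPlus[OF f]] D_self by simp
  also have "\<dots> \<le> odot T (D 0) f x t" by (rule odot_upper[OF D_DeltaPlus Lip_DeltaPlus[OF f]]) simp
  finally show "f x t \<le> odot T (D 0) f x t" .
qed

lemma odot_D0_right:
  assumes f: "f \<in> Lip T D"
  shows "odot T f (D 0) = f"
proof (intro ext antisym)
  fix x t
  show "odot T f (D 0) x t \<le> f x t"
  proof (rule odot_least)
    fix y z assume "y + z = x"
    then have "D 0 z = D x y" using D_add_left[of y 0 z] D_commute[of y x] by simp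
    then show "conv T (f y) (D 0 z) t \<le> f x t"
      using Lip_le[OF f, of x y t] conv_commute[OF Lip_DeltaPlus[OF f] D_DeltaPlus] by simp
  qed
  have "f x t = conv T (f x) (D 0 0) t" using conv_H0_right[OF Lip_DeltaPlus[OF f]] D_self by simp
  also have "\<dots> \<le> odot T f (D 0) x t" by (rule odot_upper[OF Lip_DeltaPlus[OF f] D_DeltaPlus]) simp
  finally show "f x t \<le> odot T f (D 0) x t" .
qed

lemma D_PiG: "D a \<in> PiG T D"
  unfolding PiG_def
proof (intro CollectI conjI exI[of _ "\<lambda>n. a"] D_Lip allI)
  show "cauchy_seq D (\<lambda>n. a)" unfolding cauchy_seq_def wconv_def by (simp add: D_self)
  show "wconv (\<lambda>n. D a x) (D a x) sequentially" for x unfolding wconv_def by simp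
qed

lemma DD_D: "DD T (D a) (D b) = D a b"
proof (intro ext antisym)
  fix t
  show "DD T (D a) (D b) t \<le> D a b t"
    unfolding DD_def
  proof (rule DSup_least)
    fix G assume "G \<in> range (\<lambda>x. conv T (D a x) (D b x))"
    then obtain x where "G = conv T (D a x) (D b x)" by auto
    then show "G t \<le> D a b t" using D_triangle[of a x b t] D_commute[of b x] by simp
  qed simp
  have "D a b t = conv T (D a a) (D b a) t" using conv_H0_left[OF D_DeltaPlus] D_self D_commute[of a b] by simp
  also have "\<dots> \<le> DD T (D a) (D b) t"
    unfolding DD_def by (rule DSup_upper) (use conv_range D_DeltaPlus in auto)
  finally show "D a b t \<le> DD T (D a) (D b) t" .
qed

lemma Dbar_D: "Dbar T D (D a) (D b) = D a b"
  unfolding Dbar_def using D_PiG DD_D by simp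

text \<open>Right invariance gives \<open>D x y = D (x + - z\<^sub>1) y\<^sub>1\<close>, so the Lipschitz bound for \<open>f\<close> at
  \<open>x + - z\<^sub>1\<close>, followed by the splitting \<open>x = (x + - z\<^sub>1) + z\<^sub>1\<close>, bounds the left-hand side.\<close>

lemma T_D_T_le_odot:
  assumes f: "f \<in> Lip T D" and g: "g \<in> Lip T D" and yz: "y\<^sub>1 + z\<^sub>1 = y" and st: "s + (s\<^sub>1 + u\<^sub>1) = t"
  shows "T (D x y s) (T (f y\<^sub>1 s\<^sub>1) (g z\<^sub>1 u\<^sub>1)) \<le> odot T f g x t"
proof -
  note fD = Lip_DeltaPlus[OF f] and gD = Lip_DeltaPlus[OF g]
  define y' where "y' = x + - z\<^sub>1"
  have y'z: "y' + z\<^sub>1 = x" unfolding y'_def by (simp add: add.assoc)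
  have Dxy: "D x y = D y' y\<^sub>1" using D_add_right[of y' z\<^sub>1 y\<^sub>1] y'z yz by simp
  have r: "0 \<le> D x y s" "D x y s \<le> 1" "0 \<le> f y\<^sub>1 s\<^sub>1" "f y\<^sub>1 s\<^sub>1 \<le> 1" "0 \<le> g z\<^sub>1 u\<^sub>1" "g z\<^sub>1 u\<^sub>1 \<le> 1"
    using DeltaPlus_range D_DeltaPlus fD gD by auto
  have "T (D x y s) (T (f y\<^sub>1 s\<^sub>1) (g z\<^sub>1 u\<^sub>1)) = T (T (D x y s) (f y\<^sub>1 s\<^sub>1)) (g z\<^sub>1 u\<^sub>1)"
    using T_assoc r by simp
  also have "\<dots> \<le> T (f y' (s + s\<^sub>1)) (g z\<^sub>1 u\<^sub>1)"
  proof (rule T_mono_left)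
    have "T (D x y s) (f y\<^sub>1 s\<^sub>1) \<le> conv T (D y' y\<^sub>1) (f y\<^sub>1) (s + s\<^sub>1)"
      unfolding Dxy by (rule conv_upper[OF D_DeltaPlus fD]) simp
    also have "\<dots> \<le> f y' (s + s\<^sub>1)" by (rule Lip_le[OF f])
    finally show "T (D x y s) (f y\<^sub>1 s\<^sub>1) \<le> f y' (s + s\<^sub>1)" .
  qed (use r T_range DeltaPlus_range fD in auto)
  also have "\<dots> \<le> conv T (f y') (g z\<^sub>1) t"
    by (rule conv_upper[OF fD gD]) (use st in \<open>simp add: add.assoc\<close>)
  also have "\<dots> \<le> odot T f g x t" by (rule odot_upper[OF fD gD y'z])
  finally show ?thesis .
qed

lemma odot_Lip:
  assumes f: "f \<in> Lip T D" and g: "g \<in> Lip T D"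
  shows "odot T f g \<in> Lip T D"
proof -
  note fD = Lip_DeltaPlus[OF f] and gD = Lip_DeltaPlus[OF g]
  have "conv T (D x y) (odot T f g y) t \<le> odot T f g x t" for x y t
  proof (rule conv_least)
    fix s u assume su: "s + u = t"
    define B where "B = (\<lambda>F. F u) ` {conv T (f y\<^sub>1) (g z\<^sub>1) |y\<^sub>1 z\<^sub>1. y\<^sub>1 + z\<^sub>1 = y}"
    have "B \<noteq> {}" unfolding B_def using add_0_right[of y] by blast
    moreover have "0 \<le> b \<and> b \<le> 1" if "b \<in> B" for b using that conv_range[OF fD gD] unfolding B_def by auto
    moreover have Dr: "0 \<le> D x y s" "D x y s \<le> 1" using DeltaPlus_range[OF D_DeltaPlus] by auto
    moreover have "odot T f g y u = Sup B" unfolding odot_def DSup_def B_def by simp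
    moreover have "T (D x y s) b \<le> odot T f g x t" if "b \<in> B" for b
    proof -
      obtain y\<^sub>1 z\<^sub>1 where yz: "y\<^sub>1 + z\<^sub>1 = y" and b: "b = conv T (f y\<^sub>1) (g z\<^sub>1) u"
        using \<open>b \<in> B\<close> unfolding B_def by auto
      define C where "C = {T (f y\<^sub>1 s\<^sub>1) (g z\<^sub>1 u\<^sub>1) |s\<^sub>1 u\<^sub>1. s\<^sub>1 + u\<^sub>1 = u}"
      have "C \<noteq> {}" unfolding C_def using add_0_right[of u] by blast
      moreover have "0 \<le> c \<and> c \<le> 1" if "c \<in> C" for c
        using that T_range DeltaPlus_range fD gD unfolding C_def by blast
      moreover have "T (D x y s) c \<le> odot T f g x t" if "c \<in> C" for c
        using that T_D_T_le_odot[OF f g yz] su unfolding C_def by auto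
      ultimately have "T (D x y s) (Sup C) \<le> odot T f g x t" using T_Sup_le[OF Dr] by blast
      then show ?thesis unfolding b conv_def C_def .
    qed
    ultimately show "T (D x y s) (odot T f g y u) \<le> odot T f g x t" using T_Sup_le[OF Dr] by metis
  qed
  then show ?thesis unfolding Lip_def using odot_DeltaPlus[OF fD gD] by (auto simp: le_fun_def)
qed

subsection \<open>The invertible Lipschitz maps\<close>

lemma unit_split_close_to_one:
  assumes f: "f \<in> Lip T D" and g: "g \<in> Lip T D" and fg: "odot T f g = D 0"
    and t: "0 < t" and e: "0 < e" "e \<le> 1"
  shows "\<exists>y. 1 - e < f y (ereal t) \<and> 1 - e < g (- y) (ereal t)"
proof -
  note fD = Lip_DeltaPlus[OF f] and gD = Lip_DeltaPlus[OF g]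
  define A where "A = {conv T (f y) (g z) |y z. y + z = 0}"
  have "Sup ((\<lambda>F. F (ereal t)) ` A) = 1"
    using fg t arg_cong[OF fg, of "\<lambda>h. h 0 (ereal t)"] unfolding odot_def DSup_def A_def
    by (simp add: D_self H0_def)
  moreover have "(\<lambda>F. F (ereal t)) ` A \<noteq> {}" unfolding A_def using add_0_right[of "0::'a"] by blast
  ultimately obtain b where "b \<in> (\<lambda>F. F (ereal t)) ` A" "1 - e < b"
    using less_cSupE[of "1 - e" "(\<lambda>F. F (ereal t)) ` A"] e by auto
  then obtain y z where yz: "y + z = 0" and "1 - e < conv T (f y) (g z) (ereal t)"
    unfolding A_def by auto
  moreover define S where "S = {T (f y s) (g z u) |s u. s + u = ereal t}"
  moreover have "S \<noteq> {}" unfolding S_def using add_0_right[of "ereal t"] by blast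
  ultimately obtain w where "w \<in> S" "1 - e < w" using less_cSupE[of "1 - e" S] unfolding conv_def by auto
  then obtain s u where su: "s + u = ereal t" "1 - e < T (f y s) (g z u)" unfolding S_def by auto
  then obtain p q where pq: "s = ereal p" "u = ereal q" "p + q = t" using ereal_add_eq_real by blast
  have r: "0 \<le> f y s" "f y s \<le> 1" "0 \<le> g z u" "g z u \<le> 1" using DeltaPlus_range fD gD by auto
  have fy: "1 - e < f y s" and gz: "1 - e < g z u" using su(2) T_le_left[OF r] T_le_right[OF r] by auto
  then have "0 < p" "0 < q"
    using e DeltaPlus_nonpos[OF fD, of s y] DeltaPlus_nonpos[OF gD, of u z] pq by (auto simp: not_less[symmetric])
  then have "f y s \<le> f y (ereal t)" "g z u \<le> g z (ereal t)"
    using DeltaPlus_mono[OF fD] DeltaPlus_mono[OF gD] pq by auto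
  moreover have "z = - y" using yz neg_eq_iff_add_eq_0[of y z] by simp
  ultimately show ?thesis using fy gz by (intro exI[of _ y]) auto
qed

lemma unit_seq_close_to_one:
  assumes f: "f \<in> Lip T D" and g: "g \<in> Lip T D" and fg: "odot T f g = D 0"
  obtains Y where "\<And>t d. 0 < t \<Longrightarrow> 0 < d \<Longrightarrow>
    eventually (\<lambda>n. 1 - d < f (Y n) (ereal t) \<and> 1 - d < g (- Y n) (ereal t)) sequentially"
proof -
  define \<epsilon> where "\<epsilon> n = inverse (real (Suc n))" for n
  have "\<exists>y. 1 - \<epsilon> n < f y (ereal (\<epsilon> n)) \<and> 1 - \<epsilon> n < g (- y) (ereal (\<epsilon> n))" for n
    by (rule unit_split_close_to_one[OF f g fg]) (auto simp: \<epsilon>_def field_simps)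
  then obtain Y where Y: "\<And>n. 1 - \<epsilon> n < f (Y n) (ereal (\<epsilon> n)) \<and> 1 - \<epsilon> n < g (- Y n) (ereal (\<epsilon> n))"
    by metis
  have \<epsilon>_0: "\<epsilon> \<longlonglongrightarrow> 0" unfolding \<epsilon>_def by (rule LIMSEQ_inverse_real_of_nat)
  show thesis
  proof (rule that)
    fix t d :: real assume "0 < t" "0 < d"
    then have "eventually (\<lambda>n. \<epsilon> n < min d t) sequentially"
      using order_tendstoD(2)[OF \<epsilon>_0, of "min d t"] by simp
    then show "eventually (\<lambda>n. 1 - d < f (Y n) (ereal t) \<and> 1 - d < g (- Y n) (ereal t)) sequentially"
    proof (rule eventually_mono)
      fix n assume n: "\<epsilon> n < min d t"
      then have "f (Y n) (ereal (\<epsilon> n)) \<le> f (Y n) (ereal t)" "g (- Y n) (ereal (\<epsilon> n)) \<le> g (- Y n) (ereal t)"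
        using DeltaPlus_mono[OF Lip_DeltaPlus[OF f]] DeltaPlus_mono[OF Lip_DeltaPlus[OF g]] by auto
      then show "1 - d < f (Y n) (ereal t) \<and> 1 - d < g (- Y n) (ereal t)" using Y[of n] n by auto
    qed
  qed
qed

lemma D_ge_unit_split:
  assumes f: "f \<in> Lip T D" and g: "g \<in> Lip T D" and fg: "odot T f g = D 0"
  shows "T (f y (ereal s)) (g (- z) (ereal u)) \<le> D z y (ereal (s + u))"
proof -
  note fD = Lip_DeltaPlus[OF f] and gD = Lip_DeltaPlus[OF g]
  have "T (f y (ereal s)) (g (- z) (ereal u)) \<le> conv T (f y) (g (- z)) (ereal (s + u))"
    by (rule conv_upper[OF fD gD]) simp
  also have "\<dots> \<le> odot T f g (y + - z) (ereal (s + u))" by (rule odot_upper[OF fD gD]) simp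
  also have "odot T f g (y + - z) = D z y" using fg D_add_right[of 0 z "y + - z"] by (simp add: add.assoc)
  finally show ?thesis .
qed

lemma unit_seq_cauchy:
  assumes f: "f \<in> Lip T D" and g: "g \<in> Lip T D" and fg: "odot T f g = D 0"
    and Y: "\<And>t d. 0 < t \<Longrightarrow> 0 < d \<Longrightarrow>
      eventually (\<lambda>n. 1 - d < f (Y n) (ereal t) \<and> 1 - d < g (- Y n) (ereal t)) sequentially"
  shows "cauchy_seq D Y"
proof -
  let ?F = "\<lambda>(n, m). D (Y n) (Y m)"
  have "eventually (\<lambda>i. a < ?F i (ereal t)) (sequentially \<times>\<^sub>F sequentially)"
    if t: "0 < t" and a: "a < 1" for t a
  proof -
    obtain d where d: "d > 0" "\<forall>x y. 1 - d < x \<longrightarrow> x \<le> 1 \<longrightarrow> 1 - d < y \<longrightarrow> y \<le> 1 \<longrightarrow> a < T x y"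
      using T_close_to_one[of "1 - a"] a by auto
    obtain N where N: "\<And>n. N \<le> n \<Longrightarrow> 1 - d < f (Y n) (ereal (t/2)) \<and> 1 - d < g (- Y n) (ereal (t/2))"
      using Y[of "t/2" d] t d(1) unfolding eventually_sequentially by auto
    show ?thesis
      unfolding eventually_prod_sequentially
    proof (intro exI[of _ N] allI impI)
      fix m n assume "N \<le> m" "N \<le> n"
      then have "1 - d < f (Y m) (ereal (t/2))" "1 - d < g (- Y n) (ereal (t/2))" using N by auto
      then have "a < T (f (Y m) (ereal (t/2))) (g (- Y n) (ereal (t/2)))"
        using d(2) DeltaPlus_range[OF Lip_DeltaPlus[OF f]] DeltaPlus_range[OF Lip_DeltaPlus[OF g]] by simp
      also have "\<dots> \<le> D (Y n) (Y m) (ereal (t/2 + t/2))" by (rule D_ge_unit_split[OF f g fg])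
      finally show "a < ?F (n, m) (ereal t)" by simp
    qed
  qed
  moreover have "?F i \<in> DeltaPlus" for i by (simp add: D_DeltaPlus split: prod.split)
  ultimately show ?thesis
    unfolding cauchy_seq_def using wconv_H0_iff[of ?F "sequentially \<times>\<^sub>F sequentially"] by blast
qed

lemma unit_le_D:
  assumes f: "f \<in> Lip T D" and g: "g \<in> Lip T D" and fg: "odot T f g = D 0"
    and near: "\<And>t d. 0 < t \<Longrightarrow> 0 < d \<Longrightarrow> \<exists>y. 1 - d < g (- y) (ereal t) \<and> 1 - d < D a y (ereal t)"
  shows "f x (ereal r) \<le> D a x (ereal r)"
proof (rule DeltaPlus_le_at_left[OF Lip_DeltaPlus[OF f]])
  fix v assume v: "v < r"
  show "f x (ereal v) \<le> D a x (ereal r)"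
  proof (rule field_le_epsilon)
    fix e :: real assume e: "0 < e"
    define c where "c = f x (ereal v)"
    define \<delta> where "\<delta> = (r - v) / 2"
    have c: "0 \<le> c" "c \<le> 1" using DeltaPlus_range Lip_DeltaPlus[OF f] unfolding c_def by auto
    obtain d where d: "d > 0" "\<forall>a b. 1 - d < a \<longrightarrow> a \<le> 1 \<longrightarrow> 1 - d < b \<longrightarrow> b \<le> 1 \<longrightarrow> c - e < T (T c a) b"
      using T_T_close_right[OF c e] by auto
    have "0 < \<delta>" using v unfolding \<delta>_def by simp
    then obtain y where y: "1 - d < g (- y) (ereal \<delta>)" "1 - d < D a y (ereal \<delta>)"
      using near d(1) by blast
    have r1: "0 \<le> D a y (ereal \<delta>)" "D a y (ereal \<delta>) \<le> 1" "0 \<le> g (- y) (ereal \<delta>)" "g (- y) (ereal \<delta>) \<le> 1"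
      using DeltaPlus_range D_DeltaPlus Lip_DeltaPlus[OF g] by auto
    have r2: "0 \<le> T c (g (- y) (ereal \<delta>))" "T c (g (- y) (ereal \<delta>)) \<le> 1" using T_range c r1 by auto
    have "c - e < T (T c (g (- y) (ereal \<delta>))) (D a y (ereal \<delta>))" using d y r1 by auto
    also have "\<dots> = T (D a y (ereal \<delta>)) (T c (g (- y) (ereal \<delta>)))" using T_commute r1 r2 by auto
    also have "\<dots> \<le> T (D a y (ereal \<delta>)) (D y x (ereal (v + \<delta>)))"
      using T_mono D_ge_unit_split[OF f g fg, of x v y \<delta>] r1 r2 DeltaPlus_range[OF D_DeltaPlus]
      unfolding c_def by simp
    also have "\<dots> \<le> conv T (D a y) (D y x) (ereal r)"
      by (rule conv_upper[OF D_DeltaPlus D_DeltaPlus]) (simp add: \<delta>_def)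
    also have "\<dots> \<le> D a x (ereal r)" by (rule D_triangle)
    finally show "f x (ereal v) \<le> D a x (ereal r) + e" unfolding c_def by simp
  qed
qed

lemma D_le_Lip:
  assumes f: "f \<in> Lip T D"
    and near: "\<And>t d. 0 < t \<Longrightarrow> 0 < d \<Longrightarrow> \<exists>y. 1 - d < f y (ereal t) \<and> 1 - d < D a y (ereal t)"
  shows "D a x (ereal r) \<le> f x (ereal r)"
proof (rule DeltaPlus_le_at_left[OF D_DeltaPlus])
  fix v assume v: "v < r"
  show "D a x (ereal v) \<le> f x (ereal r)"
  proof (rule field_le_epsilon)
    fix e :: real assume e: "0 < e"
    define c where "c = D x a (ereal v)"
    define \<delta> where "\<delta> = (r - v) / 2"
    have c: "0 \<le> c" "c \<le> 1" using DeltaPlus_range D_DeltaPlus unfolding c_def by auto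
    obtain d where d: "d > 0" "\<forall>a b. 1 - d < a \<longrightarrow> a \<le> 1 \<longrightarrow> 1 - d < b \<longrightarrow> b \<le> 1 \<longrightarrow> c - e < T (T c a) b"
      using T_T_close_right[OF c e] by auto
    have "0 < \<delta>" using v unfolding \<delta>_def by simp
    then obtain y where y: "1 - d < f y (ereal \<delta>)" "1 - d < D a y (ereal \<delta>)"
      using near d(1) by blast
    have r1: "0 \<le> D a y (ereal \<delta>)" "D a y (ereal \<delta>) \<le> 1" "0 \<le> f y (ereal \<delta>)" "f y (ereal \<delta>) \<le> 1"
      using DeltaPlus_range D_DeltaPlus Lip_DeltaPlus[OF f] by auto
    have r2: "0 \<le> T c (D a y (ereal \<delta>))" "T c (D a y (ereal \<delta>)) \<le> 1" using T_range c r1 by auto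
    have "c - e < T (T c (D a y (ereal \<delta>))) (f y (ereal \<delta>))" using d y r1 by auto
    also have "\<dots> \<le> T (D x y (ereal (v + \<delta>))) (f y (ereal \<delta>))"
    proof (rule T_mono_left)
      have "T c (D a y (ereal \<delta>)) \<le> conv T (D x a) (D a y) (ereal (v + \<delta>))"
        unfolding c_def by (rule conv_upper[OF D_DeltaPlus D_DeltaPlus]) simp
      also have "\<dots> \<le> D x y (ereal (v + \<delta>))" by (rule D_triangle)
      finally show "T c (D a y (ereal \<delta>)) \<le> D x y (ereal (v + \<delta>))" .
    qed (use r1 r2 DeltaPlus_range D_DeltaPlus in auto)
    also have "\<dots> \<le> conv T (D x y) (f y) (ereal r)"
      by (rule conv_upper[OF D_DeltaPlus Lip_DeltaPlus[OF f]]) (simp add: \<delta>_def)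
    also have "\<dots> \<le> f x (ereal r)" by (rule Lip_le[OF f])
    finally show "D a x (ereal v) \<le> f x (ereal r) + e" unfolding c_def using D_commute[of a x] by simp
  qed
qed

lemma unit_eq_D:
  assumes complete: "complete_mg D"
    and f: "f \<in> Lip T D" and g: "g \<in> Lip T D" and fg: "odot T f g = D 0"
  shows "\<exists>a. f = D a"
proof -
  obtain Y where Y: "\<And>t d. 0 < t \<Longrightarrow> 0 < d \<Longrightarrow>
      eventually (\<lambda>n. 1 - d < f (Y n) (ereal t) \<and> 1 - d < g (- Y n) (ereal t)) sequentially"
    using unit_seq_close_to_one[OF f g fg] by blast
  obtain a where a: "wconv (\<lambda>n. D (Y n) a) H0 sequentially"
    using complete unit_seq_cauchy[OF f g fg Y] unfolding complete_mg_def by blast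
  have Da: "eventually (\<lambda>n. 1 - d < D a (Y n) (ereal t)) sequentially" if "0 < t" "0 < d" for t d
    using a that unfolding wconv_H0_iff[OF D_DeltaPlus] by (simp add: D_commute[of a])
  have near: "\<exists>y. 1 - d < f y (ereal t) \<and> 1 - d < g (- y) (ereal t) \<and> 1 - d < D a y (ereal t)"
    if "0 < t" "0 < d" for t d
    using eventually_happens'[OF sequentially_bot eventually_conj[OF Y[OF that] Da[OF that]]] by auto
  have "f x = D a x" for x
  proof (rule DeltaPlus_eqI[OF Lip_DeltaPlus[OF f] D_DeltaPlus])
    fix r :: real
    show "f x (ereal r) = D a x (ereal r)"
      using unit_le_D[OF f g fg] D_le_Lip[OF f] near by (meson antisym)
  qed
  then show ?thesis by blast
qed

end

section \<open>Transport along an isometric isomorphism\<close>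

lemma Lip_comp:
  assumes iso: "\<And>x' y'. D' x' y' = D (J x') (J y')" and f: "f \<in> Lip T D"
  shows "f \<circ> J \<in> Lip T D'"
  using f unfolding Lip_def by (simp add: iso)

lemma PiG_comp:
  assumes J: "surj J" and iso: "\<And>x' y'. D' x' y' = D (J x') (J y')" and f: "f \<in> PiG T D"
  shows "f \<circ> J \<in> PiG T D'"
proof -
  obtain a where fL: "f \<in> Lip T D"
    and a: "cauchy_seq D a" "\<And>x. wconv (\<lambda>n. D (a n) x) (f x) sequentially"
    using f unfolding PiG_def by blast
  define a' where "a' n = inv J (a n)" for n
  have Ja': "J (a' n) = a n" for n unfolding a'_def using J by (simp add: surj_f_inv_f)
  have "cauchy_seq D' a'" using a(1) unfolding cauchy_seq_def by (simp add: iso Ja')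
  moreover have "wconv (\<lambda>n. D' (a' n) x') ((f \<circ> J) x') sequentially" for x'
    using a(2)[of "J x'"] by (simp add: iso Ja')
  ultimately show ?thesis unfolding PiG_def using Lip_comp[of D' D J, OF iso fL] by blast
qed

lemma PiG_comp_iff:
  assumes J: "bij J" and iso: "\<And>x' y'. D' x' y' = D (J x') (J y')"
  shows "f \<circ> J \<in> PiG T D' \<longleftrightarrow> f \<in> PiG T D"
proof
  have JJ: "J (inv J x) = x" for x using J by (simp add: bij_is_surj surj_f_inv_f)
  have iso': "D x y = D' (inv J x) (inv J y)" for x y by (simp add: iso JJ)
  assume "f \<circ> J \<in> PiG T D'"
  then have "f \<circ> J \<circ> inv J \<in> PiG T D"
    using PiG_comp[of "inv J" D D', OF bij_is_surj[OF bij_imp_bij_inv[OF J]] iso'] by blast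
  then show "f \<in> PiG T D" by (simp add: comp_def JJ)
qed (rule PiG_comp[of J D' D, OF bij_is_surj[OF J] iso])

lemma DD_comp:
  assumes "surj J"
  shows "DD T (f \<circ> J) (g \<circ> J) = DD T f g"
proof -
  have "range (\<lambda>x'. conv T (f (J x')) (g (J x'))) = range (\<lambda>x. conv T (f x) (g x))"
    using range_composition[of "\<lambda>x. conv T (f x) (g x)" J] assms by simp
  then show ?thesis unfolding DD_def by simp
qed

lemma Dbar_comp:
  assumes J: "bij J" and iso: "\<And>x' y'. D' x' y' = D (J x') (J y')"
  shows "Dbar T D' (f \<circ> J) (g \<circ> J) = Dbar T D f g"
proof -
  have "f \<circ> J = g \<circ> J \<longleftrightarrow> f = g"
  proof
    assume "f \<circ> J = g \<circ> J"
    then have "f \<circ> (J \<circ> inv J) = g \<circ> (J \<circ> inv J)" by (simp flip: comp_assoc)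
    then show "f = g" using surj_iff[THEN iffD1, OF bij_is_surj[OF J]] by simp
  qed simp
  then show ?thesis
    unfolding Dbar_def using PiG_comp_iff[of J D' D, OF J iso] DD_comp[OF bij_is_surj[OF J]] by simp
qed

lemma odot_comp:
  assumes J: "bij J" and hom: "\<And>x' y'. J (x' + y') = J x' + J y'"
  shows "odot T (f \<circ> J) (g \<circ> J) = odot T f g \<circ> J"
proof
  fix x'
  have "{conv T (f (J y')) (g (J z')) |y' z'. y' + z' = x'} = {conv T (f y) (g z) |y z. y + z = J x'}"
  proof (intro set_eqI iffI)
    fix F assume "F \<in> {conv T (f (J y')) (g (J z')) |y' z'. y' + z' = x'}"
    then obtain y' z' where yz: "y' + z' = x'" "F = conv T (f (J y')) (g (J z'))" by blast
    then have "J y' + J z' = J x'" using hom[of y' z'] by simp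
    then show "F \<in> {conv T (f y) (g z) |y z. y + z = J x'}" using yz(2) by blast
  next
    fix F assume "F \<in> {conv T (f y) (g z) |y z. y + z = J x'}"
    then obtain y z where yz: "y + z = J x'" "F = conv T (f y) (g z)" by blast
    obtain y' z' where "y = J y'" "z = J z'" using surjD[OF bij_is_surj[OF J]] by metis
    moreover have "y' + z' = x'" using yz(1) hom[of y' z'] J calculation by (simp add: bij_is_inj inj_eq)
    ultimately show "F \<in> {conv T (f (J y')) (g (J z')) |y' z'. y' + z' = x'}" using yz(2) by blast
  qed
  then show "odot T (f \<circ> J) (g \<circ> J) x' = (odot T f g \<circ> J) x'" unfolding odot_def by simp
qed

lemma Lip_monoid_iso_of_isometric_iso:
  fixes I :: "'a::group_add \<Rightarrow> 'b::group_add"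
  assumes I: "bij I" and hom: "\<And>x y. I (x + y) = I x + I y" and iso: "\<And>x y. D' (I x) (I y) = D x y"
  shows "\<exists>\<Phi> :: ('a \<Rightarrow> dfun) \<Rightarrow> ('b \<Rightarrow> dfun).
            bij_betw \<Phi> (Lip T D) (Lip T D')
          \<and> (\<forall>f\<in>Lip T D. \<forall>g\<in>Lip T D. \<Phi> (odot T f g) = odot T (\<Phi> f) (\<Phi> g))
          \<and> (\<forall>f\<in>Lip T D. \<forall>g\<in>Lip T D. Dbar T D' (\<Phi> f) (\<Phi> g) = Dbar T D f g)"
proof -
  define J where "J = inv I"
  have J: "bij J" unfolding J_def using I by (rule bij_imp_bij_inv)
  have IJ: "I (J x') = x'" for x' unfolding J_def using I by (simp add: bij_is_surj surj_f_inv_f)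
  have JI: "J (I x) = x" for x unfolding J_def using I by (simp add: bij_is_inj)
  have J_hom: "J (x' + y') = J x' + J y'" for x' y'
    using arg_cong[OF hom[of "J x'" "J y'"], of J] IJ JI by simp
  have J_iso: "D' x' y' = D (J x') (J y')" for x' y' using iso[of "J x'" "J y'"] IJ by simp
  have "bij_betw (\<lambda>f. f \<circ> J) (Lip T D) (Lip T D')"
  proof (rule bij_betw_byWitness[where f' = "\<lambda>h. h \<circ> I"])
    show "\<forall>f\<in>Lip T D. f \<circ> J \<circ> I = f" "\<forall>h\<in>Lip T D'. h \<circ> I \<circ> J = h"
      using IJ JI by (simp_all add: comp_def)
    show "(\<lambda>f. f \<circ> J) ` Lip T D \<subseteq> Lip T D'" using Lip_comp[of D' D J, OF J_iso] by blast
    show "(\<lambda>h. h \<circ> I) ` Lip T D' \<subseteq> Lip T D" using Lip_comp[of D D' I] iso by auto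
  qed
  then show ?thesis
    by (intro exI[of _ "\<lambda>f. f \<circ> J"] conjI ballI)
      (simp_all add: odot_comp[OF J J_hom] Dbar_comp[of J D' D, OF J J_iso])
qed

section \<open>Recovering the group from the monoid\<close>

locale Lip_monoid_isometry =
  G: invariant_menger_group T D + G': invariant_menger_group T D'
  for T :: "real \<Rightarrow> real \<Rightarrow> real"
    and D :: "'a::group_add \<Rightarrow> 'a \<Rightarrow> dfun" and D' :: "'b::group_add \<Rightarrow> 'b \<Rightarrow> dfun" +
  fixes \<Phi> :: "('a \<Rightarrow> dfun) \<Rightarrow> 'b \<Rightarrow> dfun"
  assumes complete: "complete_mg D" and complete': "complete_mg D'"
    and bij: "bij_betw \<Phi> (Lip T D) (Lip T D')"
    and hom: "\<And>f g. f \<in> Lip T D \<Longrightarrow> g \<in> Lip T D \<Longrightarrow> \<Phi> (odot T f g) = odot T (\<Phi> f) (\<Phi> g)"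
    and isometry: "\<And>f g. f \<in> Lip T D \<Longrightarrow> g \<in> Lip T D \<Longrightarrow> Dbar T D' (\<Phi> f) (\<Phi> g) = Dbar T D f g"
begin

lemma Phi_Lip: "f \<in> Lip T D \<Longrightarrow> \<Phi> f \<in> Lip T D'"
  using bij_betwE[OF bij] by blast

lemma Phi_surj:
  assumes "h \<in> Lip T D'"
  obtains f where "f \<in> Lip T D" "\<Phi> f = h"
  using bij_betw_imp_surj_on[OF bij] assms by (metis imageE)

lemma Phi_D0: "\<Phi> (D 0) = D' 0"
proof -
  obtain h where h: "h \<in> Lip T D" "\<Phi> h = D' 0" using Phi_surj[OF G'.D_Lip] .
  have "\<Phi> (D 0) = odot T (\<Phi> h) (\<Phi> (D 0))" using h(2) G'.odot_D0_left[OF Phi_Lip[OF G.D_Lip]] by simp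
  also have "\<dots> = \<Phi> (odot T h (D 0))" using hom[OF h(1) G.D_Lip] by simp
  also have "\<dots> = D' 0" using G.odot_D0_right[OF h(1)] h(2) by simp
  finally show ?thesis .
qed

lemma Phi_D: "\<exists>b. \<Phi> (D a) = D' b"
proof (rule G'.unit_eq_D[OF complete' Phi_Lip[OF G.D_Lip] Phi_Lip[OF G.D_Lip[of "- a"]]])
  show "odot T (\<Phi> (D a)) (\<Phi> (D (- a))) = D' 0"
    using hom[OF G.D_Lip G.D_Lip, of a "- a", symmetric] G.odot_D[of a "- a"] Phi_D0 by simp
qed

lemma Phi_eq_D'_imp_D:
  assumes f: "f \<in> Lip T D" and "\<Phi> f = D' b"
  shows "\<exists>a. f = D a"
proof -
  obtain g where g: "g \<in> Lip T D" "\<Phi> g = D' (- b)" using Phi_surj[OF G'.D_Lip] .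
  have "\<Phi> (odot T f g) = \<Phi> (D 0)"
    using hom[OF f g(1)] assms(2) g(2) G'.odot_D[of b "- b"] Phi_D0 by simp
  then have "odot T f g = D 0"
    by (rule inj_onD[OF bij_betw_imp_inj_on[OF bij] _ G.odot_Lip[OF f g(1)] G.D_Lip])
  then show ?thesis using G.unit_eq_D[OF complete f g(1)] by blast
qed

lemma isometric_iso_of_Lip_monoid_iso:
  "\<exists>I :: 'a \<Rightarrow> 'b. bij I \<and> (\<forall>x y. I (x + y) = I x + I y) \<and> (\<forall>x y. D' (I x) (I y) = D x y)"
proof -
  obtain I where I: "\<And>a. \<Phi> (D a) = D' (I a)"
    using choice[of "\<lambda>a b. \<Phi> (D a) = D' b"] Phi_D by blast
  have I_add: "I (x + y) = I x + I y" for x y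
  proof (rule injD[OF G'.inj_D])
    have "D' (I (x + y)) = \<Phi> (odot T (D x) (D y))" using I G.odot_D by simp
    also have "\<dots> = D' (I x + I y)" using hom[OF G.D_Lip G.D_Lip] I G'.odot_D by simp
    finally show "D' (I (x + y)) = D' (I x + I y)" .
  qed
  have I_iso: "D' (I x) (I y) = D x y" for x y
    using isometry[OF G.D_Lip G.D_Lip, of x y] G'.Dbar_D G.Dbar_D I by simp
  have "inj I"
  proof (rule injI)
    fix x y assume "I x = I y"
    then have "D x y = H0" using I_iso[of x y] G'.D_self by simp
    then show "x = y" using G.D_eq_H0_iff by simp
  qed
  moreover have "b \<in> range I" for b
  proof -
    obtain f where f: "f \<in> Lip T D" "\<Phi> f = D' b" using Phi_surj[OF G'.D_Lip] .
    obtain a where "f = D a" using Phi_eq_D'_imp_D[OF f] by blast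
    then have "D' (I a) = D' b" using I[of a] f(2) by simp
    then have "I a = b" by (rule injD[OF G'.inj_D])
    then show ?thesis by blast
  qed
  ultimately show ?thesis using I_add I_iso by (auto simp: bij_def)
qed

end

theorem mainTheorem19:
  fixes T :: "real \<Rightarrow> real \<Rightarrow> real"
    and D :: "'a::group_add \<Rightarrow> 'a \<Rightarrow> dfun"
    and D' :: "'b::group_add \<Rightarrow> 'b \<Rightarrow> dfun"
  assumes "left_cont_tnorm T"
    and "menger_group T D" and "invariant D" and "complete_mg D"
    and "menger_group T D'" and "invariant D'" and "complete_mg D'"
  shows "(\<exists>I :: 'a \<Rightarrow> 'b. bij I \<and> (\<forall>x y. I (x + y) = I x + I y)
            \<and> (\<forall>x y. D' (I x) (I y) = D x y))
     \<longleftrightarrow>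
         (\<exists>\<Phi> :: ('a \<Rightarrow> dfun) \<Rightarrow> ('b \<Rightarrow> dfun).
            bij_betw \<Phi> (Lip T D) (Lip T D')
          \<and> (\<forall>f\<in>Lip T D. \<forall>g\<in>Lip T D. \<Phi> (odot T f g) = odot T (\<Phi> f) (\<Phi> g))
          \<and> (\<forall>f\<in>Lip T D. \<forall>g\<in>Lip T D. Dbar T D' (\<Phi> f) (\<Phi> g) = Dbar T D f g))"
proof -
  have "invariant_menger_group T D" "invariant_menger_group T D'"
    using assms by (simp_all add: invariant_menger_group_def invariant_menger_group_axioms_def lc_tnorm_def)
  then have Lip_iso: "Lip_monoid_isometry T D D' \<Phi>"
    if "bij_betw \<Phi> (Lip T D) (Lip T D')"
      and "\<forall>f\<in>Lip T D. \<forall>g\<in>Lip T D. \<Phi> (odot T f g) = odot T (\<Phi> f) (\<Phi> g)"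
      and "\<forall>f\<in>Lip T D. \<forall>g\<in>Lip T D. Dbar T D' (\<Phi> f) (\<Phi> g) = Dbar T D f g"
    for \<Phi> :: "('a \<Rightarrow> dfun) \<Rightarrow> 'b \<Rightarrow> dfun"
    using that assms(4,7) by (simp add: Lip_monoid_isometry_def Lip_monoid_isometry_axioms_def)
  show ?thesis
    apply (intro iffI; elim exE conjE)
     apply (erule Lip_monoid_iso_of_isometric_iso; simp)
    by (rule Lip_monoid_isometry.isometric_iso_of_Lip_monoid_iso[OF Lip_iso])
qed

end
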